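(* Let $\phi:[0,1]\to[0,1]$ be a strictly increasing continuous function with $\phi(0)=0$ and $\phi(1)=1$, and let $1\le p<\infty$. Let $A_1$ be the operator $(A_1f)(x)=\int_0^{\phi(x)}f(t)\,dt$ on $L_p[0,1]$ and $A_2$ the operator given by the same formula on $L_2[0,1]$. Then $A_1$ is quasisimilar to $A_2$; in particular $\sigma_p(A_1)=\sigma_p(A_2)$.
   Context: For bounded operators $A_i$ on Banach spaces $X_i$ ($i=1,2$), $A_1$ is quasisimilar to $A_2$ if there exist bounded injective operators with dense range $K:X_1\to X_2$ and $L:X_2\to X_1$ such that $A_1L=LA_2$ and $KA_1=A_2K$. $\sigma_p$ denotes the point spectrum. *)

theory Defs
  imports "HOL-Analysis.Analysis"
begin

text \<open>Complex L_p[0,1], modelled as measurable functions real => complex whose p-th power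
of the modulus is integrable on [0,1]; elements are identified up to a.e. equality on [0,1].\<close>

definition Lp :: "real \<Rightarrow> (real \<Rightarrow> complex) set" where
  "Lp p = {f. set_borel_measurable lebesgue {0..1} f \<and>
              set_integrable lebesgue {0..1} (\<lambda>x. norm (f x) powr p)}"

definition lpnorm :: "real \<Rightarrow> (real \<Rightarrow> complex) \<Rightarrow> real" where
  "lpnorm p f = (set_lebesgue_integral lebesgue {0..1} (\<lambda>x. norm (f x) powr p)) powr (1 / p)"

definition aeq :: "(real \<Rightarrow> complex) \<Rightarrow> (real \<Rightarrow> complex) \<Rightarrow> bool" where
  "aeq f g \<longleftrightarrow> (AE x in lebesgue. x \<in> {0..1} \<longrightarrow> f x = g x)"

definition bounded_op :: "real \<Rightarrow> real \<Rightarrow> ((real \<Rightarrow> complex) \<Rightarrow> (real \<Rightarrow> complex)) \<Rightarrow> bool" where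
  "bounded_op p q K \<longleftrightarrow>
     (\<forall>f\<in>Lp p. K f \<in> Lp q) \<and>
     (\<forall>f\<in>Lp p. \<forall>g\<in>Lp p. aeq f g \<longrightarrow> aeq (K f) (K g)) \<and>
     (\<forall>f\<in>Lp p. \<forall>g\<in>Lp p. \<forall>a b. aeq (K (\<lambda>x. a * f x + b * g x)) (\<lambda>x. a * K f x + b * K g x)) \<and>
     (\<exists>C. \<forall>f\<in>Lp p. lpnorm q (K f) \<le> C * lpnorm p f)"

definition injective_op :: "real \<Rightarrow> ((real \<Rightarrow> complex) \<Rightarrow> (real \<Rightarrow> complex)) \<Rightarrow> bool" where
  "injective_op p K \<longleftrightarrow> (\<forall>f\<in>Lp p. aeq (K f) (\<lambda>_. 0) \<longrightarrow> aeq f (\<lambda>_. 0))"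

definition dense_range_op :: "real \<Rightarrow> real \<Rightarrow> ((real \<Rightarrow> complex) \<Rightarrow> (real \<Rightarrow> complex)) \<Rightarrow> bool" where
  "dense_range_op p q K \<longleftrightarrow>
     (\<forall>g\<in>Lp q. \<forall>e>0. \<exists>f\<in>Lp p. lpnorm q (\<lambda>x. K f x - g x) < e)"

definition quasisimilar ::
  "real \<Rightarrow> ((real \<Rightarrow> complex) \<Rightarrow> (real \<Rightarrow> complex)) \<Rightarrow>
   real \<Rightarrow> ((real \<Rightarrow> complex) \<Rightarrow> (real \<Rightarrow> complex)) \<Rightarrow> bool" where
  "quasisimilar p A1 q A2 \<longleftrightarrow>
     (\<exists>K L. bounded_op p q K \<and> injective_op p K \<and> dense_range_op p q K \<and>
            bounded_op q p L \<and> injective_op q L \<and> dense_range_op q p L \<and>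
            (\<forall>g\<in>Lp q. aeq (A1 (L g)) (L (A2 g))) \<and>
            (\<forall>f\<in>Lp p. aeq (K (A1 f)) (A2 (K f))))"

definition point_spectrum :: "real \<Rightarrow> ((real \<Rightarrow> complex) \<Rightarrow> (real \<Rightarrow> complex)) \<Rightarrow> complex set" where
  "point_spectrum p A =
     {c. \<exists>f\<in>Lp p. \<not> aeq f (\<lambda>_. 0) \<and> aeq (A f) (\<lambda>x. c * f x)}"

definition comp_volterra :: "(real \<Rightarrow> real) \<Rightarrow> (real \<Rightarrow> complex) \<Rightarrow> (real \<Rightarrow> complex)" where
  "comp_volterra \<phi> f = (\<lambda>x. set_lebesgue_integral lebesgue {0..\<phi> x} f)"

end

theory Submission
  imports Defs
begin

text \<open>The operator \<open>A\<close> itself serves as both intertwining operators \<open>K\<close> and \<open>L\<close>.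
For every \<open>p \<ge> 1\<close> it maps \<open>L\<^sub>p\<close> boundedly into \<open>C[0,1] \<subseteq> L\<^sub>q\<close>, because
\<open>|A f x| \<le> \<parallel>f\<parallel>\<^sub>1 \<le> 2\<parallel>f\<parallel>\<^sub>p\<close>. It is injective: if \<open>A f = 0\<close> a.e., the continuous
function \<open>A f\<close> vanishes everywhere, so (\<open>\<phi>\<close> being onto) every indefinite integral of \<open>f\<close>
vanishes, and Lebesgue's differentiation theorem gives \<open>f = 0\<close> a.e. Its range is dense in
\<open>L\<^sub>q\<close>: truncate \<open>g\<close>, smooth the truncation by Steklov averages into a continuous \<open>u\<close>
with \<open>u 0 = 0\<close>, and approximate \<open>u\<close> uniformly by \<open>A P' = P \<circ> \<phi> - P 0\<close>, where the
polynomial \<open>P\<close> is uniformly close to \<open>u \<circ> \<phi>\<^sup>-\<^sup>1\<close>. Finally, if \<open>f \<in> L\<^sub>p\<close> is an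
eigenfunction then so is \<open>A f \<in> L\<^sub>q\<close>, which is nonzero by injectivity; hence the point
spectra coincide.\<close>

section \<open>\<open>L\<^sub>p\<close> estimates on the unit interval\<close>

lemma le_young_powr:
  fixes a t p :: real
  assumes "a \<ge> 0" "t > 0" "p \<ge> 1"
  shows "a \<le> t + t powr (1 - p) * a powr p"
proof (cases "a \<le> t")
  case True
  then show ?thesis using assms by (smt (verit) mult_nonneg_nonneg powr_ge_zero)
next
  case False
  then have "(a/t) powr 1 \<le> (a/t) powr p" using assms by (intro powr_mono) auto
  then have "a / t \<le> a powr p / t powr p" using assms False by (simp add: powr_divide)
  then have "a \<le> a powr p / t powr p * t" using assms by (simp add: field_simps)
  also have "\<dots> = t powr (1 - p) * a powr p" using assms by (simp add: powr_diff field_simps)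
  finally show ?thesis using assms by (smt (verit) powr_ge_zero)
qed

lemma norm_add3_powr_le:
  fixes x y z :: "'a::real_normed_vector"
  assumes "q \<ge> 1"
  shows "norm (x + y + z) powr q \<le> 3 powr q * (norm x powr q + norm y powr q + norm z powr q)"
proof -
  define M where "M = max (norm x) (max (norm y) (norm z))"
  have "norm (x + y + z) \<le> norm x + norm y + norm z"
    by (metis norm_triangle_ineq add_right_mono order_trans)
  also have "\<dots> \<le> 3 * M" by (simp add: M_def)
  finally have "norm (x + y + z) powr q \<le> (3 * M) powr q" using assms by (intro powr_mono2) auto
  also have "\<dots> = 3 powr q * M powr q" by (simp add: M_def powr_mult)
  also have "M powr q \<le> norm x powr q + norm y powr q + norm z powr q"
    unfolding M_def by (auto simp: max_def)
  then have "3 powr q * M powr q \<le> 3 powr q * (norm x powr q + norm y powr q + norm z powr q)"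
    by (intro mult_left_mono) auto
  finally show ?thesis .
qed

lemma set_borel_measurable_diff:
  fixes a b :: "'a \<Rightarrow> 'b::{second_countable_topology,real_normed_vector}"
  assumes "set_borel_measurable M S a" "set_borel_measurable M S b"
  shows "set_borel_measurable M S (\<lambda>x. a x - b x)"
  using borel_measurable_diff[OF assms[unfolded set_borel_measurable_def]]
  unfolding set_borel_measurable_def by (simp add: scaleR_diff_right)

lemma set_borel_measurable_norm_powr:
  fixes h :: "'a \<Rightarrow> 'b::real_normed_vector"
  assumes "set_borel_measurable M S h"
  shows "set_borel_measurable M S (\<lambda>x. norm (h x) powr q)"
proof -
  have "(\<lambda>x. norm (indicator S x *\<^sub>R h x) powr q) \<in> borel_measurable M"
    using assms unfolding set_borel_measurable_def by measurable
  moreover have "(\<lambda>x. norm (indicator S x *\<^sub>R h x) powr q) = (\<lambda>x. indicator S x *\<^sub>R norm (h x) powr q)"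
    by (auto simp: indicator_def)
  ultimately show ?thesis unfolding set_borel_measurable_def by simp
qed

lemma continuous_on_imp_set_borel_measurable:
  fixes h :: "real \<Rightarrow> 'a::euclidean_space"
  assumes "continuous_on {a..b} h"
  shows "set_borel_measurable lebesgue {a..b} h"
  using borel_measurable_integrable absolutely_integrable_continuous_real[OF assms]
  unfolding set_integrable_def set_borel_measurable_def by blast

lemma set_dominated_convergence_small:
  fixes s :: "nat \<Rightarrow> 'a \<Rightarrow> real"
  assumes meas: "\<And>k. set_borel_measurable M S (s k)" and w: "set_integrable M S w"
    and bound: "\<And>k x. x \<in> S \<Longrightarrow> norm (s k x) \<le> w x"
    and lim: "AE x in M. x \<in> S \<longrightarrow> (\<lambda>k. s k x) \<longlonglongrightarrow> 0" and "\<delta> > 0"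
  obtains k where "set_integrable M S (s k)" "(LINT x:S|M. s k x) < \<delta>"
proof -
  let ?s = "\<lambda>k x. indicator S x *\<^sub>R s k x" and ?w = "\<lambda>x. indicator S x *\<^sub>R w x"
  have conv: "AE x in M. (\<lambda>k. ?s k x) \<longlonglongrightarrow> 0"
    using lim by eventually_elim (auto simp: indicator_def)
  have dom: "AE x in M. norm (?s k x) \<le> ?w x" for k
    using bound by (auto simp: indicator_def)
  have ms: "?s k \<in> borel_measurable M" for k
    using meas unfolding set_borel_measurable_def .
  have wi: "integrable M ?w"
    using w unfolding set_integrable_def .
  have zero: "(\<lambda>_. 0::real) \<in> borel_measurable M" by simp
  note int = integrable_dominated_convergence2[OF zero ms wi conv dom]
  obtain k where "norm (integral\<^sup>L M (?s k) - integral\<^sup>L M (\<lambda>_. 0::real)) < \<delta>"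
    using LIMSEQ_D[OF integral_dominated_convergence[OF zero ms wi conv dom] \<open>\<delta> > 0\<close>] by blast
  then have "integral\<^sup>L M (?s k) < \<delta>" by simp
  then show ?thesis
    using that int unfolding set_integrable_def set_lebesgue_integral_def by blast
qed

lemma Lp_imp_set_integrable:
  assumes "f \<in> Lp p" "p \<ge> 1"
  shows "set_integrable lebesgue {0..1} f"
proof -
  have meas: "set_borel_measurable lebesgue {0..1} f"
    and pint: "set_integrable lebesgue {0..1} (\<lambda>x. norm (f x) powr p)"
    using assms(1) unfolding Lp_def by auto
  have le: "norm (f x) \<le> 1 + norm (f x) powr p" for x
    using le_young_powr[of "norm (f x)" 1 p] assms(2) by simp
  have "set_integrable lebesgue {0..1} (\<lambda>x. 1 + norm (f x) powr p)"
    using pint by (intro set_integral_add absolutely_integrable_on_const) auto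
  then show ?thesis
    using meas by (rule set_integrable_bound) (use le in \<open>auto intro!: AE_I2\<close>)
qed

lemma
  fixes h :: "real \<Rightarrow> complex"
  assumes meas: "set_borel_measurable lebesgue {0..1} h"
    and bound: "\<And>x. x \<in> {0..1} \<Longrightarrow> norm (h x) \<le> B" and "q > 0"
  shows bounded_measurable_in_Lp: "h \<in> Lp q"
    and set_integral_norm_powr_le: "(LINT x:{0..1}|lebesgue. norm (h x) powr q) \<le> B powr q"
proof -
  have le: "norm (h x) powr q \<le> B powr q" if "x \<in> {0..1}" for x
    using bound[OF that] \<open>q > 0\<close> by (intro powr_mono2) auto
  have const: "set_integrable lebesgue {0..1::real} (\<lambda>_. B powr q)"
    by (rule absolutely_integrable_on_const) auto
  have int: "set_integrable lebesgue {0..1} (\<lambda>x. norm (h x) powr q)"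
    using const set_borel_measurable_norm_powr[OF meas] by (rule set_integrable_bound) (auto intro!: AE_I2 le)
  then show "h \<in> Lp q" using meas unfolding Lp_def by blast
  have "(LINT x:{0..1}|lebesgue. norm (h x) powr q) \<le> (LINT x::real:{0..1}|lebesgue. B powr q)"
    using int const by (rule set_integral_mono) (rule le)
  then show "(LINT x:{0..1}|lebesgue. norm (h x) powr q) \<le> B powr q"
    by (simp add: set_integral_const)
qed

lemma set_integral_nonneg_real:
  fixes f :: "_ \<Rightarrow> real"
  assumes "\<And>x. x \<in> A \<Longrightarrow> f x \<ge> 0"
  shows "(LINT x:A|M. f x) \<ge> 0"
  unfolding set_lebesgue_integral_def using assms
  by (intro Bochner_Integration.integral_nonneg) (simp add: indicator_def)

lemma lpnorm_le_bound:
  fixes h :: "real \<Rightarrow> complex"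
  assumes "set_borel_measurable lebesgue {0..1} h"
    and bound: "\<And>x. x \<in> {0..1} \<Longrightarrow> norm (h x) \<le> B" and "q > 0"
  shows "lpnorm q h \<le> B"
proof -
  have "norm (h 0) \<le> B" using bound by simp
  then have B: "B \<ge> 0" using norm_ge_zero order_trans by blast
  have "lpnorm q h \<le> (B powr q) powr (1/q)" unfolding lpnorm_def
    using set_integral_norm_powr_le[OF assms] \<open>q > 0\<close>
    by (intro powr_mono2 set_integral_nonneg_real) auto
  also have "\<dots> = B" using B \<open>q > 0\<close> by (simp add: powr_powr)
  finally show ?thesis .
qed

lemma lpnorm_less:
  assumes "(LINT x:{0..1}|lebesgue. norm (h x) powr q) < e powr q" "q > 0" "e > 0"
  shows "lpnorm q h < e"
proof -
  have "lpnorm q h < (e powr q) powr (1/q)" unfolding lpnorm_def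
    using assms by (intro powr_less_mono2 set_integral_nonneg_real) auto
  also have "\<dots> = e" using assms by (simp add: powr_powr)
  finally show ?thesis .
qed

text \<open>A crude Hoelder inequality, obtained from Young's inequality \<open>a \<le> t + t\<^sup>1\<^sup>-\<^sup>p a\<^sup>p\<close>
  with \<open>t = \<parallel>f\<parallel>\<^sub>p\<close>; any constant suffices for boundedness.\<close>
lemma set_integral_norm_le_lpnorm:
  assumes "f \<in> Lp p" "p \<ge> 1"
  shows "(LINT x:{0..1}|lebesgue. norm (f x)) \<le> 2 * lpnorm p f"
proof -
  define S where "S = (LINT x:{0..1}|lebesgue. norm (f x) powr p)"
  have pint: "set_integrable lebesgue {0..1} (\<lambda>x. norm (f x) powr p)"
    using assms(1) unfolding Lp_def by blast
  have nint: "set_integrable lebesgue {0..1} (\<lambda>x. norm (f x))"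
    using Lp_imp_set_integrable[OF assms] by (rule set_integrable_norm)
  have S0: "S \<ge> 0" unfolding S_def by (rule set_integral_nonneg_real) simp
  have young: "(LINT x:{0..1}|lebesgue. norm (f x)) \<le> t + t powr (1 - p) * S" if "t > 0" for t
  proof -
    have "(LINT x:{0..1}|lebesgue. norm (f x))
        \<le> (LINT x:{0..1}|lebesgue. t + t powr (1 - p) * norm (f x) powr p)"
      using nint pint \<open>t > 0\<close> assms(2)
      by (intro set_integral_mono le_young_powr set_integral_add absolutely_integrable_on_const
          set_integrable_mult_right) auto
    also have "\<dots> = t + t powr (1 - p) * S"
      using pint by (subst set_integral_add) (auto simp: S_def set_integral_const)
    finally show ?thesis .
  qed
  show ?thesis
  proof (cases "S = 0")
    case True
    have "(LINT x:{0..1}|lebesgue. norm (f x)) \<le> 0"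
    proof (rule field_le_epsilon)
      fix e :: real
      assume "e > 0"
      then show "(LINT x:{0..1}|lebesgue. norm (f x)) \<le> 0 + e" using young[of e] True by simp
    qed
    then show ?thesis using True by (simp add: lpnorm_def S_def)
  next
    case False
    define s where "s = S powr (1/p)"
    have "s > 0" using False S0 by (simp add: s_def)
    have "s powr (1 - p) * S = s powr (1 - p) * s powr p"
      using S0 assms(2) by (simp add: s_def powr_powr)
    also have "\<dots> = s" using \<open>s > 0\<close> by (simp flip: powr_add)
    finally show ?thesis using young[OF \<open>s > 0\<close>] by (simp add: s_def S_def lpnorm_def)
  qed
qed

lemma lpnorm_diff_less_three_steps:
  fixes a b c d :: "real \<Rightarrow> complex"
  assumes "q \<ge> 1" "e > 0"
    and meas: "set_borel_measurable lebesgue {0..1} a" "set_borel_measurable lebesgue {0..1} d"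
    and int: "set_integrable lebesgue {0..1} (\<lambda>x. norm (a x - b x) powr q)"
      "set_integrable lebesgue {0..1} (\<lambda>x. norm (b x - c x) powr q)"
      "set_integrable lebesgue {0..1} (\<lambda>x. norm (c x - d x) powr q)"
    and small: "(LINT x:{0..1}|lebesgue. norm (a x - b x) powr q)
      + (LINT x:{0..1}|lebesgue. norm (b x - c x) powr q)
      + (LINT x:{0..1}|lebesgue. norm (c x - d x) powr q) < e powr q / 3 powr q"
  shows "lpnorm q (\<lambda>x. a x - d x) < e"
proof (rule lpnorm_less)
  let ?s = "\<lambda>x. 3 powr q * (norm (a x - b x) powr q + norm (b x - c x) powr q + norm (c x - d x) powr q)"
  have sint: "set_integrable lebesgue {0..1} ?s"
    using int by (intro set_integrable_mult_right set_integral_add)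
  have le: "norm (a x - d x) powr q \<le> ?s x" for x
    using norm_add3_powr_le[OF \<open>q \<ge> 1\<close>, of "a x - b x" "b x - c x" "c x - d x"] by simp
  have "set_integrable lebesgue {0..1} (\<lambda>x. norm (a x - d x) powr q)"
    using sint set_borel_measurable_norm_powr[OF set_borel_measurable_diff[OF meas]]
    by (rule set_integrable_bound) (use le in \<open>auto intro!: AE_I2 order_trans[OF _ abs_ge_self]\<close>)
  then have "(LINT x:{0..1}|lebesgue. norm (a x - d x) powr q) \<le> (LINT x:{0..1}|lebesgue. ?s x)"
    using sint by (rule set_integral_mono) (rule le)
  also have "\<dots> < e powr q"
    using small int by (simp add: set_integral_add(2) field_simps)
  finally show "(LINT x:{0..1}|lebesgue. norm (a x - d x) powr q) < e powr q" .
qed (use assms in auto)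

lemma aeq_imp_integral_eq:
  assumes "aeq f g" "t \<in> {0..1}"
  shows "integral {0..t} f = integral {0..t} g"
proof -
  obtain N where N: "{x \<in> space lebesgue. \<not> (x \<in> {0..1} \<longrightarrow> f x = g x)} \<subseteq> N"
    "emeasure lebesgue N = 0" "N \<in> sets lebesgue"
    using assms(1) unfolding aeq_def by (rule AE_E)
  then have "negligible N" by (simp add: negligible_iff_null_sets null_sets_def)
  then show ?thesis
    by (rule integral_spike[symmetric]) (use N(1) assms(2) in auto)
qed

lemma continuous_aeq_zero_imp_zero:
  fixes h :: "real \<Rightarrow> complex"
  assumes "continuous_on {0..1} h" "aeq h (\<lambda>_. 0)" "x0 \<in> {0..1}"
  shows "h x0 = 0"
proof (rule ccontr)
  assume "h x0 \<noteq> 0"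
  obtain N where N: "{x \<in> space lebesgue. \<not> (x \<in> {0..1} \<longrightarrow> h x = 0)} \<subseteq> N"
    "emeasure lebesgue N = 0" "N \<in> sets lebesgue"
    using assms(2) unfolding aeq_def by (rule AE_E)
  obtain d where d: "d > 0" "\<And>x. x \<in> {0..1} \<Longrightarrow> dist x x0 < d \<Longrightarrow> dist (h x) (h x0) < norm (h x0)"
    using assms(1,3) \<open>h x0 \<noteq> 0\<close> unfolding continuous_on_iff by (metis zero_less_norm_iff)
  define a where "a = max 0 (x0 - d/2)"
  define b where "b = min 1 (x0 + d/2)"
  have "{a..b} \<subseteq> N"
  proof
    fix x assume x: "x \<in> {a..b}"
    then have "x \<in> {0..1}" "dist x x0 < d" using d(1) by (auto simp: a_def b_def dist_real_def)
    then have "h x \<noteq> 0" using d(2) by fastforce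
    then show "x \<in> N" using N(1) \<open>x \<in> {0..1}\<close> by auto
  qed
  moreover have "negligible N" using N(2,3) by (simp add: negligible_iff_null_sets null_sets_def)
  ultimately have "negligible {a..b}" using negligible_subset by blast
  moreover have "a < b" using d(1) assms(3) by (auto simp: a_def b_def)
  ultimately show False using negligible_interval(1)[of a b] by (simp add: box_real)
qed

lemma continuous_on_imp_Lp:
  fixes h :: "real \<Rightarrow> complex"
  assumes "continuous_on {0..1} h" "q > 0"
  shows "h \<in> Lp q"
proof -
  obtain B where B: "\<And>x. x \<in> {0..1} \<Longrightarrow> norm (h x) \<le> B"
    using compact_imp_bounded[OF compact_continuous_image[OF assms(1) compact_Icc]]
    unfolding bounded_iff by blast
  show ?thesis
    by (rule bounded_measurable_in_Lp[OF continuous_on_imp_set_borel_measurable[OF assms(1)] B assms(2)])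
qed

section \<open>Steklov averages and density of continuous functions\<close>

definition steklov :: "real \<Rightarrow> (real \<Rightarrow> 'a::real_normed_vector) \<Rightarrow> real \<Rightarrow> 'a" where
  "steklov h G x = integral {x..x + h} G /\<^sub>R h"

lemma steklov_tendsto_ae:
  fixes G :: "real \<Rightarrow> 'a::euclidean_space"
  assumes "\<And>a b. G integrable_on {a..b}"
  obtains N where "negligible N" "\<And>x. x \<notin> N \<Longrightarrow> ((\<lambda>h. steklov h G x) \<longlongrightarrow> G x) (at_right 0)"
proof -
  obtain N where N: "negligible N"
    "\<And>x e. \<lbrakk>x \<notin> N; 0 < e\<rbrakk> \<Longrightarrow> \<exists>d>0. \<forall>h. 0 < h \<and> h < d \<longrightarrow>
        norm (integral (cbox x (x + h *\<^sub>R One)) G /\<^sub>R h ^ DIM(real) - G x) < e"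
    using integrable_ccontinuous_explicit[of G] assms by (metis cbox_interval)
  have "((\<lambda>h. steklov h G x) \<longlongrightarrow> G x) (at_right 0)" if x: "x \<notin> N" for x
    unfolding tendsto_iff eventually_at_right_field
  proof (intro allI impI)
    fix e :: real
    assume "e > 0"
    then obtain d where "d > 0"
      "\<forall>h. 0 < h \<and> h < d \<longrightarrow> norm (integral (cbox x (x + h *\<^sub>R One)) G /\<^sub>R h ^ DIM(real) - G x) < e"
      using N(2)[OF x] by blast
    then show "\<exists>b>0. \<forall>h>0. h < b \<longrightarrow> dist (steklov h G x) (G x) < e"
      by (auto simp: steklov_def dist_norm)
  qed
  then show ?thesis using that N(1) by blast
qed

lemma continuous_on_steklov:
  fixes G :: "real \<Rightarrow> 'a::banach"
  assumes "G integrable_on {a..b + h}" "h \<ge> 0"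
  shows "continuous_on {a..b} (steklov h G)"
proof -
  define F where "F t = integral {a..t} G" for t
  have F: "continuous_on {a..b + h} F"
    unfolding F_def by (rule indefinite_integral_continuous_1[OF assms(1)])
  have "integral {x..x + h} G = F (x + h) - F x" if "x \<in> {a..b}" for x
  proof -
    have "G integrable_on {a..x + h}"
      by (rule integrable_on_subinterval[OF assms(1)]) (use that in auto)
    then show ?thesis
      using Henstock_Kurzweil_Integration.integral_combine[of a x "x + h" G] that assms(2)
      by (simp add: F_def algebra_simps)
  qed
  then have eq: "steklov h G x = (F (x + h) - F x) /\<^sub>R h" if "x \<in> {a..b}" for x
    using that by (simp add: steklov_def)
  have "continuous_on {a..b} (\<lambda>x. F (x + h))"
    by (rule continuous_on_compose2[OF F]) (use assms(2) in \<open>auto intro!: continuous_intros\<close>)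
  moreover have "continuous_on {a..b} F"
    by (rule continuous_on_subset[OF F]) (use assms(2) in auto)
  ultimately have "continuous_on {a..b} (\<lambda>x. (F (x + h) - F x) /\<^sub>R h)"
    by (intro continuous_intros)
  then show ?thesis by (rule continuous_on_eq) (simp add: eq)
qed

lemma norm_steklov_le:
  fixes G :: "real \<Rightarrow> 'a::real_normed_vector"
  assumes "G integrable_on {x..x + h}" "h > 0" "\<And>y. y \<in> {x..x + h} \<Longrightarrow> norm (G y) \<le> B"
  shows "norm (steklov h G x) \<le> B"
proof -
  have "norm (G x) \<le> B" using assms(2,3) by simp
  then have "B \<ge> 0" using norm_ge_zero order_trans by blast
  then have "norm (integral (cbox x (x + h)) G) \<le> B * Henstock_Kurzweil_Integration.content (cbox x (x + h))"
    by (rule has_integral_bound[OF _ integrable_integral]) (use assms in \<open>auto simp: cbox_interval\<close>)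
  then have "norm (integral {x..x + h} G) \<le> B * h"
    using assms(2) by (simp add: cbox_interval)
  then show ?thesis using assms(2) by (simp add: steklov_def field_simps)
qed

lemma steklov_eq_zero:
  assumes "\<And>y. y \<in> {x..x + h} \<Longrightarrow> G y = 0"
  shows "steklov h G x = 0"
proof -
  have "integral {x..x + h} G = integral {x..x + h} (\<lambda>_. 0)"
    using assms by (intro integral_cong) auto
  then show ?thesis by (simp add: steklov_def)
qed

lemma indefinite_integrals_zero_imp_aeq_zero:
  fixes f :: "real \<Rightarrow> complex"
  assumes f: "f integrable_on {0..1}" and zero: "\<And>t. t \<in> {0..1} \<Longrightarrow> integral {0..t} f = 0"
  shows "aeq f (\<lambda>_. 0)"
proof -
  define G where "G x = (if x \<in> {0..1} then f x else 0)" for x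
  have "G integrable_on UNIV"
    unfolding G_def using f integrable_restrict_UNIV by blast
  then obtain N where N: "negligible N" "\<And>x. x \<notin> N \<Longrightarrow> ((\<lambda>h. steklov h G x) \<longlongrightarrow> G x) (at_right 0)"
    using steklov_tendsto_ae integrable_on_subinterval by (metis subset_UNIV)
  have "f x = 0" if "x \<notin> N" "x \<in> {0..<1}" for x
  proof -
    have "steklov h G x = 0" if "0 < h" "h < 1 - x" for h
    proof -
      have "integral {x..x + h} G = integral {x..x + h} f"
        using \<open>x \<in> {0..<1}\<close> that by (intro integral_cong) (auto simp: G_def)
      also have "\<dots> = integral {0..x + h} f - integral {0..x} f"
        using Henstock_Kurzweil_Integration.integral_combine[of 0 x "x + h" f]
          integrable_on_subinterval[OF f, of 0 "x + h"] \<open>x \<in> {0..<1}\<close> that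
        by (simp add: algebra_simps)
      also have "\<dots> = 0" using zero[of "x + h"] zero[of x] \<open>x \<in> {0..<1}\<close> that by simp
      finally show ?thesis by (simp add: steklov_def)
    qed
    then have "\<forall>\<^sub>F h in at_right 0. steklov h G x = 0"
      unfolding eventually_at_right_field using \<open>x \<in> {0..<1}\<close> by (intro exI[of _ "1 - x"]) auto
    then have "((\<lambda>h. steklov h G x) \<longlongrightarrow> 0) (at_right 0)" by (rule tendsto_eventually)
    then have "G x = 0" using N(2)[OF \<open>x \<notin> N\<close>] tendsto_unique trivial_limit_at_right_real by blast
    then show ?thesis using \<open>x \<in> {0..<1}\<close> by (simp add: G_def)
  qed
  moreover have "N \<union> {1} \<in> null_sets lebesgue"
    using N(1) by (simp add: negligible_iff_null_sets)
  ultimately show ?thesis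
    unfolding aeq_def by (rule_tac AE_I'[of "N \<union> {1}"]) force+
qed

definition truncation :: "nat \<Rightarrow> (real \<Rightarrow> complex) \<Rightarrow> real \<Rightarrow> complex" where
  "truncation n g x = (if 1 / real n \<le> x \<and> norm (g x) \<le> real n then g x else 0)"

lemma set_borel_measurable_truncation:
  assumes "set_borel_measurable lebesgue {0..1} g"
  shows "set_borel_measurable lebesgue {0..1} (truncation n g)"
proof -
  define G where "G x = indicator {0..1} x *\<^sub>R g x" for x
  have [measurable]: "G \<in> borel_measurable lebesgue" "(\<lambda>x::real. x) \<in> borel_measurable lebesgue"
    using assms measurable_completion[of "\<lambda>x::real. x" lborel lborel]
    unfolding set_borel_measurable_def G_def by auto
  have "(\<lambda>x. if 1 / real n \<le> x \<and> norm (G x) \<le> real n then G x else 0) \<in> borel_measurable lebesgue"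
    by measurable
  moreover have "(\<lambda>x. if 1 / real n \<le> x \<and> norm (G x) \<le> real n then G x else 0)
      = (\<lambda>x. indicator {0..1} x *\<^sub>R truncation n g x)"
    by (auto simp: G_def truncation_def indicator_def)
  ultimately show ?thesis unfolding set_borel_measurable_def by simp
qed

lemma Lp_truncation_approx:
  assumes "g \<in> Lp q" "q > 0" "\<delta> > 0"
  obtains n where "n > 0" "set_integrable lebesgue {0..1} (\<lambda>x. norm (truncation n g x - g x) powr q)"
    "(LINT x:{0..1}|lebesgue. norm (truncation n g x - g x) powr q) < \<delta>"
proof -
  have meas: "set_borel_measurable lebesgue {0..1} g"
    and pint: "set_integrable lebesgue {0..1} (\<lambda>x. norm (g x) powr q)"
    using assms(1) unfolding Lp_def by auto
  let ?s = "\<lambda>k x. norm (truncation (Suc k) g x - g x) powr q"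
  have eventually_zero: "\<forall>\<^sub>F k in sequentially. ?s k x = 0" if "x > 0" for x
  proof -
    obtain N :: nat where N: "max (1 / x) (norm (g x)) \<le> real N" using real_arch_simple by blast
    have "?s k x = 0" if "k \<ge> N" for k
    proof -
      have "1 / x \<le> real (Suc k)" "norm (g x) \<le> real (Suc k)" using N that by auto
      then have "1 / real (Suc k) \<le> x" using \<open>x > 0\<close> by (simp add: field_simps)
      then show ?thesis using \<open>norm (g x) \<le> real (Suc k)\<close> by (simp add: truncation_def)
    qed
    then show ?thesis unfolding eventually_sequentially by blast
  qed
  have "AE x in lebesgue. x \<in> {0..1} \<longrightarrow> (\<lambda>k. ?s k x) \<longlonglongrightarrow> 0"
  proof (rule AE_I'[of "{0}"])
    show "{x \<in> space lebesgue. \<not> (x \<in> {0..1} \<longrightarrow> (\<lambda>k. ?s k x) \<longlonglongrightarrow> 0)} \<subseteq> {0}"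
    proof
      fix x
      assume x: "x \<in> {x \<in> space lebesgue. \<not> (x \<in> {0..1} \<longrightarrow> (\<lambda>k. ?s k x) \<longlonglongrightarrow> 0)}"
      then have "\<not> x > 0" using tendsto_eventually[OF eventually_zero] by blast
      with x show "x \<in> {0}" by auto
    qed
  qed simp
  moreover have "set_borel_measurable lebesgue {0..1} (?s k)" for k
    by (intro set_borel_measurable_norm_powr set_borel_measurable_diff set_borel_measurable_truncation meas)
  moreover have "norm (?s k x) \<le> norm (g x) powr q" for k x
    by (simp add: truncation_def)
  ultimately obtain k where "set_integrable lebesgue {0..1} (?s k)" "(LINT x:{0..1}|lebesgue. ?s k x) < \<delta>"
    using set_dominated_convergence_small[OF _ pint _ _ \<open>\<delta> > 0\<close>, of ?s] by blast
  then show ?thesis using that[of "Suc k"] by blast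
qed

lemma steklov_approx_Lq:
  fixes G g :: "real \<Rightarrow> complex"
  assumes "q > 0" "\<delta> > 0"
    and G_int: "\<And>c d. G integrable_on {c..d}" and G_bound: "\<And>x. norm (G x) \<le> B"
    and meas: "set_borel_measurable lebesgue {0..1} g" and extends: "\<And>x. x \<in> {0..1} \<Longrightarrow> G x = g x"
    and h_pos: "\<And>k. h k > 0" and hlim: "filterlim h (at_right 0) sequentially"
  obtains k where "set_integrable lebesgue {0..1} (\<lambda>x. norm (steklov (h k) G x - g x) powr q)"
    "(LINT x:{0..1}|lebesgue. norm (steklov (h k) G x - g x) powr q) < \<delta>"
proof -
  let ?s = "\<lambda>k x. norm (steklov (h k) G x - g x) powr q"
  obtain N where N: "negligible N"
    "\<And>x. x \<notin> N \<Longrightarrow> ((\<lambda>h. steklov h G x) \<longlongrightarrow> G x) (at_right 0)"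
    using steklov_tendsto_ae[OF G_int] by blast
  have conv: "(\<lambda>k. steklov (h k) G x - g x) \<longlonglongrightarrow> 0" if "x \<notin> N" "x \<in> {0..1}" for x
    using filterlim_compose[OF N(2)[OF that(1)] hlim] extends[OF that(2)] by (simp add: LIM_zero)
  have "AE x in lebesgue. x \<in> {0..1} \<longrightarrow> (\<lambda>k. ?s k x) \<longlonglongrightarrow> 0"
  proof (rule AE_I'[of N])
    show "{x \<in> space lebesgue. \<not> (x \<in> {0..1} \<longrightarrow> (\<lambda>k. ?s k x) \<longlonglongrightarrow> 0)} \<subseteq> N"
    proof
      fix x
      assume x: "x \<in> {x \<in> space lebesgue. \<not> (x \<in> {0..1} \<longrightarrow> (\<lambda>k. ?s k x) \<longlonglongrightarrow> 0)}"
      have "(\<lambda>k. ?s k x) \<longlonglongrightarrow> 0" if "x \<notin> N"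
        using tendsto_powr'[OF tendsto_norm_zero[OF conv[OF that]] tendsto_const] x \<open>q > 0\<close> by simp
      with x show "x \<in> N" by blast
    qed
  qed (use N(1) negligible_iff_null_sets in blast)
  moreover have "set_borel_measurable lebesgue {0..1} (?s k)" for k
    using continuous_on_steklov[OF G_int less_imp_le[OF h_pos]]
    by (intro set_borel_measurable_norm_powr set_borel_measurable_diff
        continuous_on_imp_set_borel_measurable meas)
  moreover have "norm (?s k x) \<le> (2 * B) powr q" if "x \<in> {0..1}" for k x
  proof -
    have "norm (steklov (h k) G x) \<le> B" by (rule norm_steklov_le[OF G_int h_pos G_bound])
    then have "norm (steklov (h k) G x - g x) \<le> 2 * B"
      using G_bound[of x] extends[OF that] norm_triangle_ineq4[of "steklov (h k) G x" "g x"] by simp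
    then show ?thesis using \<open>q > 0\<close> by (simp add: powr_mono2)
  qed
  ultimately show ?thesis
    using set_dominated_convergence_small[of lebesgue "{0..1}" ?s "\<lambda>_. (2 * B) powr q" \<delta>]
      absolutely_integrable_on_const[of "{0..1::real}"] \<open>\<delta> > 0\<close> that by auto
qed

lemma continuous_approx_vanishing_near_zero:
  fixes g :: "real \<Rightarrow> complex"
  assumes "q > 0" "\<delta> > 0" "a > 0"
    and meas: "set_borel_measurable lebesgue {0..1} g"
    and bound: "\<And>x. x \<in> {0..1} \<Longrightarrow> norm (g x) \<le> B"
    and vanish: "\<And>x. x \<in> {0..1} \<Longrightarrow> x < a \<Longrightarrow> g x = 0"
  obtains u where "continuous_on {0..1} u" "u 0 = 0"
    "set_integrable lebesgue {0..1} (\<lambda>x. norm (u x - g x) powr q)"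
    "(LINT x:{0..1}|lebesgue. norm (u x - g x) powr q) < \<delta>"
proof -
  define G where "G x = (if x \<in> {0..1} then g x else 0)" for x
  have "norm (g 0) \<le> B" using bound by simp
  then have "B \<ge> 0" using norm_ge_zero order_trans by blast
  then have G_bound: "norm (G x) \<le> B" for x
    using bound by (simp add: G_def)
  have "set_integrable lebesgue {0..1} g"
    using absolutely_integrable_on_const[of "{0..1::real}" B] meas
    by (rule set_integrable_bound) (use bound in \<open>auto intro!: AE_I2 order_trans[OF _ abs_ge_self]\<close>)
  then have "G integrable_on UNIV"
    unfolding G_def using set_lebesgue_integral_eq_integral(1) integrable_restrict_UNIV by blast
  then have G_int: "G integrable_on {c..d}" for c d
    by (rule integrable_on_subinterval) auto
  define h where "h k = a / 2 * inverse (real (Suc k))" for k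
  have h_pos: "h k > 0" and h_less: "h k < a" for k
    using \<open>a > 0\<close> by (auto simp: h_def field_simps intro: add_pos_nonneg)
  have hlim: "filterlim h (at_right 0) sequentially" unfolding h_def
    by (intro tendsto_imp_filterlim_at_right tendsto_mult_right_zero LIMSEQ_inverse_real_of_nat)
      (use h_pos in \<open>simp add: h_def\<close>)
  have "G x = g x" if "x \<in> {0..1}" for x using that by (simp add: G_def)
  then obtain k where "set_integrable lebesgue {0..1} (\<lambda>x. norm (steklov (h k) G x - g x) powr q)"
    "(LINT x:{0..1}|lebesgue. norm (steklov (h k) G x - g x) powr q) < \<delta>"
    using steklov_approx_Lq[OF \<open>q > 0\<close> \<open>\<delta> > 0\<close> G_int G_bound meas _ h_pos hlim] by blast
  moreover have "continuous_on {0..1} (steklov (h k) G)"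
    using continuous_on_steklov[OF G_int less_imp_le[OF h_pos]] by simp
  moreover have "steklov (h k) G 0 = 0"
    using vanish h_less[of k] by (intro steklov_eq_zero) (auto simp: G_def)
  ultimately show ?thesis using that by blast
qed

section \<open>The composed Volterra operator\<close>

locale unit_interval_homeomorphism =
  fixes \<phi> :: "real \<Rightarrow> real"
  assumes strict_mono: "strict_mono_on {0..1} \<phi>" and continuous: "continuous_on {0..1} \<phi>"
    and phi_0: "\<phi> 0 = 0" and phi_1: "\<phi> 1 = 1"
begin

lemma image_eq: "\<phi> ` {0..1} = {0..1}"
proof
  show "\<phi> ` {0..1} \<subseteq> {0..1}"
    using strict_mono_on_leD[OF strict_mono, of 0] strict_mono_on_leD[OF strict_mono, of _ 1] phi_0 phi_1
    by fastforce
  show "{0..1} \<subseteq> \<phi> ` {0..1}"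
    using IVT'[of \<phi> 0 _ 1] continuous phi_0 phi_1 by fastforce
qed

lemma phi_in_unit_interval: "x \<in> {0..1} \<Longrightarrow> \<phi> x \<in> {0..1}"
  using image_eq by blast

lemma comp_volterra_eq_integral:
  assumes "set_integrable lebesgue {0..1} f" "x \<in> {0..1}"
  shows "comp_volterra \<phi> f x = integral {0..\<phi> x} f"
proof -
  have "set_integrable lebesgue {0..\<phi> x} f"
    by (rule set_integrable_subset[OF assms(1)]) (use phi_in_unit_interval[OF assms(2)] in auto)
  then show ?thesis unfolding comp_volterra_def by (rule set_lebesgue_integral_eq_integral(2))
qed

lemma continuous_on_comp_volterra:
  assumes "set_integrable lebesgue {0..1} f"
  shows "continuous_on {0..1} (comp_volterra \<phi> f)"
proof -
  have "f integrable_on {0..1}" using set_lebesgue_integral_eq_integral(1)[OF assms] .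
  then have "continuous_on {0..1} (\<lambda>t. integral {0..t} f)"
    by (rule indefinite_integral_continuous_1)
  then have "continuous_on {0..1} (\<lambda>x. integral {0..\<phi> x} f)"
    by (rule continuous_on_compose2[OF _ continuous]) (use phi_in_unit_interval in blast)
  then show ?thesis
    by (rule continuous_on_eq) (simp add: comp_volterra_eq_integral[OF assms])
qed

lemma norm_comp_volterra_le:
  assumes "set_integrable lebesgue {0..1} f" "x \<in> {0..1}"
  shows "norm (comp_volterra \<phi> f x) \<le> (LINT y:{0..1}|lebesgue. norm (f y))"
proof -
  have f: "f integrable_on {0..1}"
    using set_lebesgue_integral_eq_integral(1)[OF assms(1)] .
  have nf: "(\<lambda>y. norm (f y)) integrable_on {0..1}"
    using set_lebesgue_integral_eq_integral(1)[OF set_integrable_norm[OF assms(1)]] .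
  have sub: "{0..\<phi> x} \<subseteq> {0..1}" using phi_in_unit_interval[OF assms(2)] by auto
  have "norm (integral {0..\<phi> x} f) \<le> integral {0..\<phi> x} (\<lambda>y. norm (f y))"
    using integrable_on_subinterval[OF f sub] integrable_on_subinterval[OF nf sub]
    by (rule integral_norm_bound_integral) simp
  also have "\<dots> \<le> integral {0..1} (\<lambda>y. norm (f y))"
    using sub integrable_on_subinterval[OF nf sub] nf by (rule integral_subset_le) simp
  also have "\<dots> = (LINT y:{0..1}|lebesgue. norm (f y))"
    using set_lebesgue_integral_eq_integral(2)[OF set_integrable_norm[OF assms(1)]] by simp
  finally show ?thesis using comp_volterra_eq_integral[OF assms] by simp
qed

lemma comp_volterra_in_Lp:
  assumes "f \<in> Lp p" "p \<ge> 1" "q > 0"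
  shows "comp_volterra \<phi> f \<in> Lp q" "lpnorm q (comp_volterra \<phi> f) \<le> 2 * lpnorm p f"
proof -
  have f: "set_integrable lebesgue {0..1} f" by (rule Lp_imp_set_integrable[OF assms(1,2)])
  have meas: "set_borel_measurable lebesgue {0..1} (comp_volterra \<phi> f)"
    by (rule continuous_on_imp_set_borel_measurable[OF continuous_on_comp_volterra[OF f]])
  show "comp_volterra \<phi> f \<in> Lp q"
    using meas norm_comp_volterra_le[OF f] assms(3) by (rule bounded_measurable_in_Lp)
  have "lpnorm q (comp_volterra \<phi> f) \<le> (LINT y:{0..1}|lebesgue. norm (f y))"
    using meas norm_comp_volterra_le[OF f] assms(3) by (rule lpnorm_le_bound)
  also have "\<dots> \<le> 2 * lpnorm p f" by (rule set_integral_norm_le_lpnorm[OF assms(1,2)])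
  finally show "lpnorm q (comp_volterra \<phi> f) \<le> 2 * lpnorm p f" .
qed

lemma comp_volterra_aeq:
  assumes "set_integrable lebesgue {0..1} f" "set_integrable lebesgue {0..1} g" "aeq f g"
  shows "aeq (comp_volterra \<phi> f) (comp_volterra \<phi> g)"
  unfolding aeq_def using assms phi_in_unit_interval
  by (intro AE_I2) (simp add: comp_volterra_eq_integral aeq_imp_integral_eq)

lemma comp_volterra_linear:
  assumes f: "set_integrable lebesgue {0..1} f" and g: "set_integrable lebesgue {0..1} g"
  shows "aeq (comp_volterra \<phi> (\<lambda>x. a * f x + b * g x))
    (\<lambda>x. a * comp_volterra \<phi> f x + b * comp_volterra \<phi> g x)"
  unfolding aeq_def
proof (intro AE_I2 impI)
  fix x :: real
  assume x: "x \<in> {0..1}"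
  have fg: "set_integrable lebesgue {0..1} (\<lambda>x. a * f x + b * g x)"
    using f g by (intro set_integral_add set_integrable_mult_right)
  have sub: "{0..\<phi> x} \<subseteq> {0..1}" using phi_in_unit_interval[OF x] by auto
  show "comp_volterra \<phi> (\<lambda>x. a * f x + b * g x) x = a * comp_volterra \<phi> f x + b * comp_volterra \<phi> g x"
    unfolding comp_volterra_eq_integral[OF fg x] comp_volterra_eq_integral[OF f x]
      comp_volterra_eq_integral[OF g x]
    using integrable_on_subinterval[OF set_lebesgue_integral_eq_integral(1)[OF f] sub]
      integrable_on_subinterval[OF set_lebesgue_integral_eq_integral(1)[OF g] sub]
    by (simp add: integral_add integrable_on_mult_right)
qed

lemma bounded_op_comp_volterra:
  assumes "p \<ge> 1" "q > 0"
  shows "bounded_op p q (comp_volterra \<phi>)"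
  unfolding bounded_op_def
proof (intro conjI)
  note integrable = Lp_imp_set_integrable[OF _ assms(1)]
  show "\<forall>f\<in>Lp p. comp_volterra \<phi> f \<in> Lp q"
    using comp_volterra_in_Lp(1)[OF _ assms] by blast
  show "\<forall>f\<in>Lp p. \<forall>g\<in>Lp p. aeq f g \<longrightarrow> aeq (comp_volterra \<phi> f) (comp_volterra \<phi> g)"
    using comp_volterra_aeq integrable by blast
  show "\<forall>f\<in>Lp p. \<forall>g\<in>Lp p. \<forall>a b. aeq (comp_volterra \<phi> (\<lambda>x. a * f x + b * g x))
      (\<lambda>x. a * comp_volterra \<phi> f x + b * comp_volterra \<phi> g x)"
    using comp_volterra_linear integrable by blast
  show "\<exists>C. \<forall>f\<in>Lp p. lpnorm q (comp_volterra \<phi> f) \<le> C * lpnorm p f"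
    using comp_volterra_in_Lp(2)[OF _ assms] by blast
qed

lemma injective_op_comp_volterra:
  assumes "p \<ge> 1"
  shows "injective_op p (comp_volterra \<phi>)"
  unfolding injective_op_def
proof (intro ballI impI)
  fix f
  assume "f \<in> Lp p" and zero: "aeq (comp_volterra \<phi> f) (\<lambda>_. 0)"
  then have f: "set_integrable lebesgue {0..1} f" using Lp_imp_set_integrable assms by blast
  show "aeq f (\<lambda>_. 0)"
  proof (rule indefinite_integrals_zero_imp_aeq_zero)
    show "f integrable_on {0..1}" using set_lebesgue_integral_eq_integral(1)[OF f] .
    fix t :: real
    assume "t \<in> {0..1}"
    then have "t \<in> \<phi> ` {0..1}" by (simp add: image_eq)
    then obtain x where x: "x \<in> {0..1}" "\<phi> x = t" by blast
    have "comp_volterra \<phi> f x = 0"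
      by (rule continuous_aeq_zero_imp_zero[OF continuous_on_comp_volterra[OF f] zero x(1)])
    then show "integral {0..t} f = 0" using comp_volterra_eq_integral[OF f x(1)] x(2) by simp
  qed
qed

lemma uniform_approx_by_comp_volterra:
  assumes u: "continuous_on {0..1} u" "u 0 = 0" and "\<epsilon> > 0"
  obtains f where "continuous_on {0..1} f"
    "\<And>x. x \<in> {0..1} \<Longrightarrow> norm (comp_volterra \<phi> f x - u x) < \<epsilon>"
proof -
  define \<psi> where "\<psi> = inv_into {0..1} \<phi>"
  have psi_phi: "\<psi> (\<phi> x) = x" if "x \<in> {0..1}" for x
    unfolding \<psi>_def using strict_mono_on_imp_inj_on[OF strict_mono] that by (rule inv_into_f_f)
  have "continuous_on {0..1} \<psi>"
    using continuous_on_inv[OF continuous compact_Icc, of \<psi>] psi_phi image_eq by simp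
  moreover have "\<psi> ` {0..1} \<subseteq> {0..1}"
    using inv_into_into[of _ \<phi> "{0..1}"] image_eq by (auto simp: \<psi>_def)
  ultimately have v: "continuous_on {0..1} (u \<circ> \<psi>)"
    unfolding comp_def by (rule continuous_on_compose2[OF u(1)])
  obtain P where P: "polynomial_function P"
    "\<forall>t \<in> {0..1}. norm ((u \<circ> \<psi>) t - P t) < \<epsilon> / 2"
    using Stone_Weierstrass_polynomial_function[OF compact_Icc v half_gt_zero[OF \<open>\<epsilon> > 0\<close>]]
    by blast
  obtain P' where P': "polynomial_function P'" "\<And>x. (P has_vector_derivative P' x) (at x)"
    using has_vector_derivative_polynomial_function[OF P(1)] by blast
  have cont: "continuous_on {0..1} P'" by (rule continuous_on_polymonial_function[OF P'(1)])
  show ?thesis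
  proof (rule that[OF cont])
    fix x :: real
    assume x: "x \<in> {0..1}"
    have phi_x: "\<phi> x \<in> {0..1}" by (rule phi_in_unit_interval[OF x])
    have "(P' has_integral P (\<phi> x) - P 0) {0..\<phi> x}"
      using phi_x P'(2) by (intro fundamental_theorem_of_calculus) (auto intro: has_vector_derivative_at_within)
    then have "comp_volterra \<phi> P' x = P (\<phi> x) - P 0"
      using comp_volterra_eq_integral[OF absolutely_integrable_continuous_real[OF cont] x]
      by (simp add: integral_unique)
    then have "comp_volterra \<phi> P' x - u x = (P (\<phi> x) - (u \<circ> \<psi>) (\<phi> x)) + ((u \<circ> \<psi>) 0 - P 0)"
      using psi_phi[OF x] psi_phi[of 0] phi_0 u(2) by simp
    then have "norm (comp_volterra \<phi> P' x - u x) \<le> norm ((u \<circ> \<psi>) (\<phi> x) - P (\<phi> x)) + norm ((u \<circ> \<psi>) 0 - P 0)"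
      by (metis norm_minus_commute norm_triangle_ineq)
    also have "\<dots> < \<epsilon>"
      using bspec[OF P(2) phi_x] bspec[OF P(2), of 0] by simp
    finally show "norm (comp_volterra \<phi> P' x - u x) < \<epsilon>" .
  qed
qed

lemma comp_volterra_approx_continuous:
  assumes u: "continuous_on {0..1} u" "u 0 = 0" and "p \<ge> 1" "q > 0" "\<delta> > 0"
  obtains f where "f \<in> Lp p" "set_borel_measurable lebesgue {0..1} (comp_volterra \<phi> f)"
    "set_integrable lebesgue {0..1} (\<lambda>x. norm (comp_volterra \<phi> f x - u x) powr q)"
    "(LINT x:{0..1}|lebesgue. norm (comp_volterra \<phi> f x - u x) powr q) < \<delta>"
proof -
  define \<epsilon> where "\<epsilon> = (\<delta> / 2) powr (1 / q)"
  have "\<epsilon> > 0" using \<open>\<delta> > 0\<close> by (simp add: \<epsilon>_def)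
  have eps_q: "\<epsilon> powr q = \<delta> / 2" using \<open>\<delta> > 0\<close> \<open>q > 0\<close> by (simp add: \<epsilon>_def powr_powr)
  obtain f where f: "continuous_on {0..1} f"
    and close: "\<And>x. x \<in> {0..1} \<Longrightarrow> norm (comp_volterra \<phi> f x - u x) \<le> \<epsilon>"
    using uniform_approx_by_comp_volterra[OF u \<open>\<epsilon> > 0\<close>] less_imp_le by metis
  have f_Lp: "f \<in> Lp p" using continuous_on_imp_Lp[OF f] assms(3) by simp
  have meas: "set_borel_measurable lebesgue {0..1} (comp_volterra \<phi> f)"
    using continuous_on_imp_set_borel_measurable continuous_on_comp_volterra
      Lp_imp_set_integrable[OF f_Lp assms(3)] by blast
  have meas_diff: "set_borel_measurable lebesgue {0..1} (\<lambda>x. comp_volterra \<phi> f x - u x)"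
    using meas continuous_on_imp_set_borel_measurable[OF u(1)] by (rule set_borel_measurable_diff)
  have "set_integrable lebesgue {0..1} (\<lambda>x. norm (comp_volterra \<phi> f x - u x) powr q)"
    using bounded_measurable_in_Lp[OF meas_diff close \<open>q > 0\<close>] unfolding Lp_def by blast
  moreover have "(LINT x:{0..1}|lebesgue. norm (comp_volterra \<phi> f x - u x) powr q) < \<delta>"
    using set_integral_norm_powr_le[OF meas_diff close \<open>q > 0\<close>] eps_q \<open>\<delta> > 0\<close> by simp
  ultimately show ?thesis using that f_Lp meas by blast
qed

lemma dense_range_op_comp_volterra:
  assumes "p \<ge> 1" "q \<ge> 1"
  shows "dense_range_op p q (comp_volterra \<phi>)"
  unfolding dense_range_op_def
proof (intro ballI allI impI)
  fix g and e :: real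
  assume g: "g \<in> Lp q" and "e > 0"
  have "q > 0" using assms(2) by simp
  define \<delta> where "\<delta> = e powr q / 3 powr q / 3"
  have "\<delta> > 0" using \<open>e > 0\<close> by (simp add: \<delta>_def)
  obtain n where "n > 0"
    and int_tr: "set_integrable lebesgue {0..1} (\<lambda>x. norm (truncation n g x - g x) powr q)"
    and small_tr: "(LINT x:{0..1}|lebesgue. norm (truncation n g x - g x) powr q) < \<delta>"
    using Lp_truncation_approx[OF g \<open>q > 0\<close> \<open>\<delta> > 0\<close>] by blast
  have meas_g: "set_borel_measurable lebesgue {0..1} g" using g unfolding Lp_def by blast
  have "1 / real n > 0" using \<open>n > 0\<close> by simp
  then obtain u where u: "continuous_on {0..1} u" "u 0 = 0"
    and int_u: "set_integrable lebesgue {0..1} (\<lambda>x. norm (u x - truncation n g x) powr q)"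
    and small_u: "(LINT x:{0..1}|lebesgue. norm (u x - truncation n g x) powr q) < \<delta>"
    by (rule continuous_approx_vanishing_near_zero[OF \<open>q > 0\<close> \<open>\<delta> > 0\<close> _
          set_borel_measurable_truncation[OF meas_g], where B="real n"])
      (auto simp: truncation_def)
  obtain f where "f \<in> Lp p" and meas_Af: "set_borel_measurable lebesgue {0..1} (comp_volterra \<phi> f)"
    and int_Af: "set_integrable lebesgue {0..1} (\<lambda>x. norm (comp_volterra \<phi> f x - u x) powr q)"
    and small_Af: "(LINT x:{0..1}|lebesgue. norm (comp_volterra \<phi> f x - u x) powr q) < \<delta>"
    using comp_volterra_approx_continuous[OF u assms(1) \<open>q > 0\<close> \<open>\<delta> > 0\<close>] by blast
  have "3 * \<delta> = e powr q / 3 powr q" by (simp add: \<delta>_def)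
  then have "lpnorm q (\<lambda>x. comp_volterra \<phi> f x - g x) < e"
    using small_Af small_u small_tr
    by (intro lpnorm_diff_less_three_steps[OF assms(2) \<open>e > 0\<close> meas_Af meas_g int_Af int_u int_tr])
      linarith
  then show "\<exists>f\<in>Lp p. lpnorm q (\<lambda>x. comp_volterra \<phi> f x - g x) < e"
    using \<open>f \<in> Lp p\<close> by blast
qed

lemma point_spectrum_comp_volterra_subset:
  assumes "p \<ge> 1" "q \<ge> 1"
  shows "point_spectrum p (comp_volterra \<phi>) \<subseteq> point_spectrum q (comp_volterra \<phi>)"
proof
  fix c
  assume "c \<in> point_spectrum p (comp_volterra \<phi>)"
  then obtain f where f: "f \<in> Lp p" "\<not> aeq f (\<lambda>_. 0)" and eigen: "aeq (comp_volterra \<phi> f) (\<lambda>x. c * f x)"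
    unfolding point_spectrum_def by blast
  define g where "g = comp_volterra \<phi> f"
  have g_Lp: "g \<in> Lp q" unfolding g_def using assms f(1) by (intro comp_volterra_in_Lp) auto
  have f_int: "set_integrable lebesgue {0..1} f" by (rule Lp_imp_set_integrable[OF f(1) assms(1)])
  have g_int: "set_integrable lebesgue {0..1} g" by (rule Lp_imp_set_integrable[OF g_Lp assms(2)])
  have "\<not> aeq g (\<lambda>_. 0)"
    using injective_op_comp_volterra[OF assms(1)] f unfolding injective_op_def g_def by blast
  moreover have "aeq (comp_volterra \<phi> g) (\<lambda>x. c * g x)"
    unfolding aeq_def
  proof (intro AE_I2 impI)
    fix x :: real
    assume x: "x \<in> {0..1}"
    have "comp_volterra \<phi> g x = integral {0..\<phi> x} g" by (rule comp_volterra_eq_integral[OF g_int x])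
    also have "\<dots> = integral {0..\<phi> x} (\<lambda>y. c * f y)"
      using eigen phi_in_unit_interval[OF x] unfolding g_def by (rule aeq_imp_integral_eq)
    also have "\<dots> = c * g x" using comp_volterra_eq_integral[OF f_int x] by (simp add: g_def)
    finally show "comp_volterra \<phi> g x = c * g x" .
  qed
  ultimately show "c \<in> point_spectrum q (comp_volterra \<phi>)"
    using g_Lp unfolding point_spectrum_def by blast
qed

end

theorem proposition5p5:
  fixes \<phi> :: "real \<Rightarrow> real" and p :: real
  assumes "strict_mono_on {0..1} \<phi>" and "continuous_on {0..1} \<phi>"
    and "\<phi> 0 = 0" and "\<phi> 1 = 1" and "1 \<le> p"
  shows "quasisimilar p (comp_volterra \<phi>) 2 (comp_volterra \<phi>) \<and>
         point_spectrum p (comp_volterra \<phi>) = point_spectrum 2 (comp_volterra \<phi>)"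
proof -
  interpret unit_interval_homeomorphism \<phi> using assms(1-4) by unfold_locales
  have p: "p \<ge> 1" and two: "(2::real) \<ge> 1" using assms(5) by simp_all
  have "quasisimilar p (comp_volterra \<phi>) 2 (comp_volterra \<phi>)"
    unfolding quasisimilar_def
    by (intro exI[of _ "comp_volterra \<phi>"] conjI ballI bounded_op_comp_volterra
        injective_op_comp_volterra dense_range_op_comp_volterra p two)
      (use p in \<open>simp_all add: aeq_def\<close>)
  moreover have "point_spectrum p (comp_volterra \<phi>) = point_spectrum 2 (comp_volterra \<phi>)"
    using point_spectrum_comp_volterra_subset[OF p two] point_spectrum_comp_volterra_subset[OF two p]
    by (rule subset_antisym)
  ultimately show ?thesis ..
qed

end
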